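(* Let $1\leq k<n$ and let $G$ be a graph of order $n$. Then $q_{k+1}(G)=n-2$ if and only if the complement $\overline{G}$ has at least $k$ balanced bipartite components or at least $k+1$ bipartite components.
   Context: All graphs are finite and simple. For a graph $G$ with adjacency matrix $A$ and diagonal degree matrix $D$, the signless Laplacian is $Q(G)=A+D$; its eigenvalues are denoted $q_1(G)\geq q_2(G)\geq\cdots\geq q_n(G)$. $\overline{G}$ denotes the complement of $G$. A connected bipartite graph is called balanced if its two vertex classes have equal size, and unbalanced otherwise; an isolated vertex is considered to be an (unbalanced) bipartite component with one empty vertex class. A bipartite component of a graph means a connected component that is bipartite (including isolated vertices). *)

theory Defs
  imports "Jordan_Normal_Form.Char_Poly" "HOL-Computational_Algebra.Polynomial"
    "HOL-Library.Multiset"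
begin

definition simple_graph :: "nat \<Rightarrow> (nat \<Rightarrow> nat \<Rightarrow> bool) \<Rightarrow> bool" where
  "simple_graph n E \<longleftrightarrow> (\<forall>i j. E i j \<longrightarrow> i < n \<and> j < n \<and> i \<noteq> j \<and> E j i)"

definition complement :: "nat \<Rightarrow> (nat \<Rightarrow> nat \<Rightarrow> bool) \<Rightarrow> nat \<Rightarrow> nat \<Rightarrow> bool" where
  "complement n E i j \<longleftrightarrow> i < n \<and> j < n \<and> i \<noteq> j \<and> \<not> E i j"

definition degree :: "nat \<Rightarrow> (nat \<Rightarrow> nat \<Rightarrow> bool) \<Rightarrow> nat \<Rightarrow> nat" where
  "degree n E i = card {j \<in> {0..<n}. E i j}"

definition signless_laplacian :: "nat \<Rightarrow> (nat \<Rightarrow> nat \<Rightarrow> bool) \<Rightarrow> real mat" where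
  "signless_laplacian n E = mat n n (\<lambda>(i, j).
     (if E i j then 1 else 0) + (if i = j then real (degree n E i) else 0))"

text \<open>Eigenvalues of Q (roots of the characteristic polynomial, with multiplicity),
  sorted non-increasingly; q_i is the i-th one (1-based).\<close>
definition q_eig :: "nat \<Rightarrow> (nat \<Rightarrow> nat \<Rightarrow> bool) \<Rightarrow> nat \<Rightarrow> real" where
  "q_eig n E i =
     rev (sorted_list_of_multiset (proots (char_poly (signless_laplacian n E)))) ! (i - 1)"

definition components :: "nat \<Rightarrow> (nat \<Rightarrow> nat \<Rightarrow> bool) \<Rightarrow> nat set set" where
  "components n E = {{u. E\<^sup>*\<^sup>* v u} | v. v < n}"

definition bipartition :: "(nat \<Rightarrow> nat \<Rightarrow> bool) \<Rightarrow> nat set \<Rightarrow> nat set \<Rightarrow> nat set \<Rightarrow> bool" where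
  "bipartition E C X Y \<longleftrightarrow> X \<union> Y = C \<and> X \<inter> Y = {} \<and>
     (\<forall>x\<in>X. \<forall>y\<in>X. \<not> E x y) \<and> (\<forall>x\<in>Y. \<forall>y\<in>Y. \<not> E x y)"

definition bipartite_comp :: "(nat \<Rightarrow> nat \<Rightarrow> bool) \<Rightarrow> nat set \<Rightarrow> bool" where
  "bipartite_comp E C \<longleftrightarrow> (\<exists>X Y. bipartition E C X Y)"

text \<open>Connected bipartite graphs have a unique bipartition, so this is well defined.\<close>
definition balanced_comp :: "(nat \<Rightarrow> nat \<Rightarrow> bool) \<Rightarrow> nat set \<Rightarrow> bool" where
  "balanced_comp E C \<longleftrightarrow> (\<exists>X Y. bipartition E C X Y \<and> card X = card Y)"

end

theory Submission
  imports Defs "HOL-Computational_Algebra.Fundamental_Theorem_Algebra"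
begin

(*
  Q(G) denotes the signless Laplacian of G and H the complement of G.  Since
  Q(G) + Q(H) = (n - 2) I + J, for every vector x

      x.Q(G)x - (n - 2) x.x  =  (sum_i x_i)^2 - sum_{ij in E(H)} (x_i + x_j)^2.

  The kernel of the quadratic form of Q(H) consists of the "alternating" vectors
  (x_i + x_j = 0 on every edge of H); it is spanned by the signed indicators of the
  bipartite components of H.  Counting eigenvalues of Q(G) that are >= n - 2 or
  > n - 2 then becomes a Courant-Fischer argument with explicit test subspaces:
  at most one eigenvalue exceeds n - 2, and the number N of eigenvalues >= n - 2
  satisfies |Bip| <= N <= |Bip| + 1, where Bip is the set of bipartite components;
  N = |Bip| if some bipartite component is unbalanced, and N = |Bip| + 1 if all
  of them are balanced and there is at least one.
*)

lemma homogeneous_system_nontrivial_solution: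
  fixes f :: "'i \<Rightarrow> 'j \<Rightarrow> real"
  assumes "finite I" "finite J" "card I < card J"
  shows "\<exists>c. (\<exists>j\<in>J. c j \<noteq> 0) \<and> (\<forall>i\<in>I. (\<Sum>j\<in>J. f i j * c j) = 0)"
  using assms
proof (induction I arbitrary: J f rule: finite_induct)
  case empty
  then have "J \<noteq> {}" by auto
  then show ?case by (intro exI[of _ "\<lambda>j. 1"]) auto
next
  case (insert i0 I)
  show ?case
  proof (cases "\<forall>j\<in>J. f i0 j = 0")
    case True
    from insert.prems insert.hyps have "card I < card J" by simp
    from insert.IH[OF insert.prems(1) this, of f] True show ?thesis by auto
  next
    case False
    \<comment> \<open>Eliminate the unknown j0 using the equation of row i0.\<close>
    then obtain j0 where j0: "j0 \<in> J" "f i0 j0 \<noteq> 0" by blast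
    define J' where "J' = J - {j0}"
    define g where "g i j = f i j - f i j0 * f i0 j / f i0 j0" for i j
    have "finite J'" "card J' = card J - 1"
      unfolding J'_def using j0 insert.prems by auto
    moreover have "card I < card J'" using insert.prems insert.hyps calculation by simp
    ultimately obtain c' where
      c': "\<exists>j\<in>J'. c' j \<noteq> 0" "\<forall>i\<in>I. (\<Sum>j\<in>J'. g i j * c' j) = 0"
      using insert.IH[of J' g] by blast
    define c where "c j = (if j = j0 then - (\<Sum>j\<in>J'. f i0 j * c' j) / f i0 j0 else c' j)" for j
    have split: "(\<Sum>j\<in>J. f i j * c j) = f i j0 * c j0 + (\<Sum>j\<in>J'. f i j * c' j)" for i
    proof -
      have "(\<Sum>j\<in>J. f i j * c j) = f i j0 * c j0 + (\<Sum>j\<in>J'. f i j * c j)"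
        unfolding J'_def using j0 insert.prems by (simp add: sum.remove)
      also have "(\<Sum>j\<in>J'. f i j * c j) = (\<Sum>j\<in>J'. f i j * c' j)"
        by (rule sum.cong) (auto simp: c_def J'_def)
      finally show ?thesis .
    qed
    have "(\<Sum>j\<in>J. f i j * c j) = 0" if i: "i \<in> insert i0 I" for i
    proof (cases "i = i0")
      case True
      then show ?thesis unfolding split using j0 by (simp add: c_def)
    next
      case False
      then have "(\<Sum>j\<in>J'. g i j * c' j) = 0" using i c' by auto
      moreover have "(\<Sum>j\<in>J'. g i j * c' j) = (\<Sum>j\<in>J'. f i j * c' j)
          - f i j0 / f i0 j0 * (\<Sum>j\<in>J'. f i0 j * c' j)"
        unfolding g_def by (simp add: sum_distrib_left sum_subtractf algebra_simps)
      ultimately show ?thesis unfolding split using j0 by (simp add: c_def)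
    qed
    moreover have "\<exists>j\<in>J. c j \<noteq> 0" using c' by (auto simp: c_def J'_def)
    ultimately show ?thesis by blast
  qed
qed

text \<open>Vectors of length n are represented as functions nat => real that vanish
  from index n on; dot is the Euclidean inner product and matvec the action of an
  n x n array on such vectors.\<close>
definition supported :: "nat \<Rightarrow> (nat \<Rightarrow> real) \<Rightarrow> bool" where
  "supported n x \<longleftrightarrow> (\<forall>i\<ge>n. x i = 0)"

definition dot :: "nat \<Rightarrow> (nat \<Rightarrow> real) \<Rightarrow> (nat \<Rightarrow> real) \<Rightarrow> real" where
  "dot n x y = (\<Sum>i<n. x i * y i)"

definition matvec :: "(nat \<Rightarrow> nat \<Rightarrow> real) \<Rightarrow> nat \<Rightarrow> (nat \<Rightarrow> real) \<Rightarrow> nat \<Rightarrow> real" where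
  "matvec a n x = (\<lambda>i. \<Sum>j<n. a i j * x j)"

lemma dot_comm: "dot n x y = dot n y x"
  unfolding dot_def by (simp add: mult.commute)

lemma dot_add_left: "dot n (\<lambda>i. x i + y i) z = dot n x z + dot n y z"
  unfolding dot_def by (simp add: algebra_simps sum.distrib)

lemma dot_scale_left: "dot n (\<lambda>i. c * x i) z = c * dot n x z"
  unfolding dot_def by (simp add: algebra_simps sum_distrib_left)

lemma dot_scale_right: "dot n z (\<lambda>i. c * x i) = c * dot n z x"
  unfolding dot_def by (simp add: algebra_simps sum_distrib_left)

lemma dot_diff_left: "dot n (\<lambda>i. x i - y i) z = dot n x z - dot n y z"
  unfolding dot_def by (simp add: algebra_simps sum_subtractf)

lemma dot_sum_left: "dot n (\<lambda>i. \<Sum>j\<in>S. f j i) z = (\<Sum>j\<in>S. dot n (f j) z)"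
  unfolding dot_def by (simp add: sum_distrib_right sum.swap[of _ S])

lemma dot_self_nonneg: "dot n x x \<ge> 0"
  unfolding dot_def by (intro sum_nonneg) auto

lemma dot_self_pos:
  assumes "supported n x" "x \<noteq> (\<lambda>_. 0)"
  shows "dot n x x > 0"
proof -
  obtain i where i: "x i \<noteq> 0" using assms(2) by auto
  then have "i < n" using assms(1) unfolding supported_def by (meson not_le)
  then have "0 < x i * x i" "\<forall>j<n. 0 \<le> x j * x j" using i by (auto simp: zero_less_mult_iff)
  then show ?thesis unfolding dot_def
    using \<open>i < n\<close> by (intro sum_pos2[of "{..<n}" i]) auto
qed

lemma supported_add: "supported n x \<Longrightarrow> supported n y \<Longrightarrow> supported n (\<lambda>i. x i + y i)"
  unfolding supported_def by auto

lemma supported_scale: "supported n x \<Longrightarrow> supported n (\<lambda>i. c * x i)"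
  unfolding supported_def by auto

lemma supported_sum:
  "(\<And>j. j \<in> S \<Longrightarrow> supported n (f j)) \<Longrightarrow> supported n (\<lambda>i. \<Sum>j\<in>S. f j i)"
  unfolding supported_def by auto

lemma orthogonal_family_independent:
  assumes "finite J"
    and nonzero: "\<And>j. j \<in> J \<Longrightarrow> supported n (w j) \<and> w j \<noteq> (\<lambda>_. 0)"
    and orth: "\<And>j l. j \<in> J \<Longrightarrow> l \<in> J \<Longrightarrow> j \<noteq> l \<Longrightarrow> dot n (w j) (w l) = 0"
    and comb: "\<And>i. i < n \<Longrightarrow> (\<Sum>j\<in>J. c j * w j i) = 0"
    and l: "l \<in> J"
  shows "c l = 0"
proof -
  have "0 = dot n (\<lambda>i. \<Sum>j\<in>J. c j * w j i) (w l)"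
    unfolding dot_def using comb by simp
  also have "\<dots> = (\<Sum>j\<in>J. c j * dot n (w j) (w l))"
    by (simp add: dot_sum_left dot_scale_left)
  also have "\<dots> = c l * dot n (w l) (w l)"
    using l assms(1) orth by (subst sum.remove[of _ l]) (auto intro!: sum.neutral)
  finally show ?thesis using dot_self_pos nonzero[OF l] by force
qed

lemma orthogonal_family_card_le:
  assumes "finite J"
    and nonzero: "\<And>j. j \<in> J \<Longrightarrow> supported n (w j) \<and> w j \<noteq> (\<lambda>_. 0)"
    and orth: "\<And>j l. j \<in> J \<Longrightarrow> l \<in> J \<Longrightarrow> j \<noteq> l \<Longrightarrow> dot n (w j) (w l) = 0"
  shows "card J \<le> n"
proof (rule ccontr)
  assume "\<not> card J \<le> n"
  then obtain c where c: "\<exists>j\<in>J. c j \<noteq> 0" "\<forall>i\<in>{..<n}. (\<Sum>j\<in>J. w j i * c j) = 0"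
    using homogeneous_system_nontrivial_solution[of "{..<n}" J "\<lambda>i j. w j i"] assms(1) by auto
  have "c l = 0" if "l \<in> J" for l
    by (rule orthogonal_family_independent[OF assms(1) nonzero orth _ that])
      (use c(2) in \<open>auto simp: mult.commute\<close>)
  with c(1) show False by blast
qed

lemma real_poly_linear_or_quadratic_factor:
  fixes p :: "real poly"
  assumes "Polynomial.degree p \<noteq> 0"
  obtains r where "[:-r, 1:] dvd p"
  | x y where "y \<noteq> 0" "[:x^2 + y^2, -2 * x, 1:] dvd p"
proof -
  interpret real_to_complex: map_poly_comm_ring_hom complex_of_real ..
  define pc where "pc = map_poly complex_of_real p"
  have "\<not> constant (poly pc)" unfolding constant_degree pc_def
    using assms by (simp add: of_real_hom.degree_map_poly_hom)
  then obtain z where z: "poly pc z = 0" using fundamental_theorem_of_algebra by blast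
  show ?thesis
  proof (cases "Im z = 0")
    case True
    then have "complex_of_real (poly p (Re z)) = 0"
      using z unfolding pc_def by (metis complex_is_Real_iff of_real_Re of_real_hom.poly_map_poly)
    then have "[:-Re z, 1:] dvd p" by (simp add: poly_eq_0_iff_dvd)
    then show ?thesis by (rule that(1))
  next
    case False
    define r where "r = [: Re z ^ 2 + Im z ^ 2, -2 * Re z, 1 :]"
    have "r \<noteq> 0" and deg_r: "Polynomial.degree r = 2" unfolding r_def by simp_all
    \<comment> \<open>The remainder of p modulo r has degree < 2 and vanishes at the non-real z.\<close>
    define s where "s = p mod r"
    have "poly (map_poly complex_of_real r) z = 0"
      unfolding r_def
      by (simp add: of_real_hom.map_poly_pCons_hom complex_eq_iff power2_eq_square algebra_simps)
    moreover have "pc = map_poly complex_of_real (r * (p div r) + s)"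
      unfolding pc_def s_def by (simp add: mult.commute)
    then have "pc = map_poly complex_of_real r * map_poly complex_of_real (p div r)
        + map_poly complex_of_real s"
      by (simp only: real_to_complex.hom_mult real_to_complex.hom_add)
    ultimately have sz: "poly (map_poly complex_of_real s) z = 0" using z by simp
    have "Polynomial.degree s < 2 \<or> s = 0"
      using degree_mod_less'[OF \<open>r \<noteq> 0\<close>] deg_r unfolding s_def by auto
    then have seq: "s = [:coeff s 0, coeff s 1:]"
      by (intro poly_eqI) (auto simp: coeff_pCons coeff_eq_0 split: nat.split)
    have "complex_of_real (coeff s 0) + complex_of_real (coeff s 1) * z = 0"
      using sz by (subst (asm) seq) (simp add: of_real_hom.map_poly_pCons_hom mult.commute)
    then have "coeff s 1 * Im z = 0" "coeff s 0 + coeff s 1 * Re z = 0"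
      by (simp_all add: complex_eq_iff)
    then have "s = 0" using False by (subst seq) simp
    then have "r dvd p" unfolding s_def by (simp add: mod_eq_0_iff_dvd)
    then show ?thesis using False unfolding r_def by (intro that(2)) auto
  qed
qed

locale symmetric_operator =
  fixes n :: nat and a :: "nat \<Rightarrow> nat \<Rightarrow> real"
  assumes symmetric: "\<And>i j. a i j = a j i"
    and zero_outside: "\<And>i j. n \<le> i \<Longrightarrow> a i j = 0"
begin

abbreviation M where "M \<equiv> matvec a n"

lemma M_supported: "supported n (M x)"
  unfolding supported_def matvec_def using zero_outside by auto

lemma M_add: "M (\<lambda>i. x i + y i) = (\<lambda>i. M x i + M y i)"
  unfolding matvec_def by (simp add: algebra_simps sum.distrib)

lemma M_scale: "M (\<lambda>i. c * x i) = (\<lambda>i. c * M x i)"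
  unfolding matvec_def by (simp add: algebra_simps sum_distrib_left)

lemma M_zero: "M (\<lambda>_. 0) = (\<lambda>_. 0)"
  unfolding matvec_def by simp

lemma M_sum: "M (\<lambda>k. \<Sum>j\<in>S. f j k) = (\<lambda>i. \<Sum>j\<in>S. M (f j) i)"
  unfolding matvec_def by (simp add: sum_distrib_left sum.swap[of _ S])

lemma M_self_adjoint: "dot n x (M y) = dot n (M x) y"
proof -
  have "dot n x (M y) = (\<Sum>i<n. \<Sum>j<n. x i * a i j * y j)"
    unfolding dot_def matvec_def by (simp add: sum_distrib_left algebra_simps)
  also have "\<dots> = (\<Sum>j<n. \<Sum>i<n. x i * a i j * y j)" by (rule sum.swap)
  also have "\<dots> = (\<Sum>j<n. (\<Sum>i<n. a j i * x i) * y j)"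
    by (intro sum.cong refl)
      (simp add: sum_distrib_right sum_distrib_left symmetric[of _ j for j] algebra_simps)
  also have "\<dots> = dot n (M x) y"
    unfolding dot_def matvec_def by simp
  finally show ?thesis .
qed

lemma M_power_supported: "supported n u \<Longrightarrow> supported n ((M ^^ j) u)"
  by (induction j) (auto simp: M_supported)

definition poly_apply :: "real poly \<Rightarrow> (nat \<Rightarrow> real) \<Rightarrow> nat \<Rightarrow> real" where
  "poly_apply p u = (\<lambda>i. \<Sum>j\<le>Polynomial.degree p. coeff p j * (M ^^ j) u i)"

lemma poly_apply_bound:
  assumes "Polynomial.degree p < N"
  shows "poly_apply p u = (\<lambda>i. \<Sum>j<N. coeff p j * (M ^^ j) u i)"
  unfolding poly_apply_def
  by (intro ext sum.mono_neutral_left) (use assms in \<open>auto simp: coeff_eq_0\<close>)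

lemma poly_apply_pCons: "poly_apply (pCons c p) u = (\<lambda>i. c * u i + M (poly_apply p u) i)"
proof -
  define N where "N = Suc (Polynomial.degree p)"
  have "Polynomial.degree (pCons c p) < Suc N" unfolding N_def
    by (metis degree_pCons_le le_imp_less_Suc)
  then have "poly_apply (pCons c p) u = (\<lambda>i. \<Sum>j<Suc N. coeff (pCons c p) j * (M ^^ j) u i)"
    by (rule poly_apply_bound)
  also have "\<dots> = (\<lambda>i. c * u i + (\<Sum>j<N. M (\<lambda>k. coeff p j * (M ^^ j) u k) i))"
    by (rule ext, subst sum.lessThan_Suc_shift) (simp add: M_scale)
  also have "\<dots> = (\<lambda>i. c * u i + M (poly_apply p u) i)"
    using poly_apply_bound[of p N u] M_sum[of "\<lambda>j k. coeff p j * (M ^^ j) u k" "{..<N}"]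
    by (simp add: N_def)
  finally show ?thesis .
qed

lemma poly_apply_0: "poly_apply 0 u = (\<lambda>_. 0)"
  unfolding poly_apply_def by simp

lemma poly_apply_add: "poly_apply (p + q) u = (\<lambda>i. poly_apply p u i + poly_apply q u i)"
proof -
  define N where "N = Suc (max (Polynomial.degree p) (Polynomial.degree q))"
  have "Polynomial.degree (p + q) < N" unfolding N_def
    using degree_add_le_max[of p q] by linarith
  then show ?thesis
    using poly_apply_bound[of p N u] poly_apply_bound[of q N u] poly_apply_bound[of "p+q" N u]
    by (simp add: N_def algebra_simps sum.distrib)
qed

lemma poly_apply_smult: "poly_apply (Polynomial.smult c p) u = (\<lambda>i. c * poly_apply p u i)"
  unfolding poly_apply_def by (simp add: sum_distrib_left algebra_simps)

lemma poly_apply_mult: "poly_apply (p * q) u = poly_apply p (poly_apply q u)"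
proof (induction p)
  case 0
  then show ?case by (simp add: poly_apply_0)
next
  case (pCons c p)
  have "poly_apply (pCons c p * q) u = poly_apply (Polynomial.smult c q + pCons 0 (p * q)) u"
    by simp
  also have "\<dots> = poly_apply (pCons c p) (poly_apply q u)"
    by (simp add: poly_apply_add poly_apply_smult poly_apply_pCons pCons.IH)
  finally show ?case .
qed

lemma poly_apply_monom: "poly_apply (monom c j) u = (\<lambda>i. c * (M ^^ j) u i)"
proof -
  have "Polynomial.degree (monom c j) < Suc j"
    by (meson degree_monom_le le_imp_less_Suc)
  from poly_apply_bound[OF this, of u] show ?thesis
    by (simp add: coeff_monom lessThan_Suc_atMost if_distrib[of "\<lambda>x. x * _"] cong: if_cong)
qed

lemma poly_apply_sum:
  "finite S \<Longrightarrow> poly_apply (\<Sum>j\<in>S. f j) u = (\<lambda>i. \<Sum>j\<in>S. poly_apply (f j) u i)"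
  by (induction S rule: finite_induct) (simp_all add: poly_apply_0 poly_apply_add)

lemma poly_apply_linear: "poly_apply [:d, 1:] u = (\<lambda>i. d * u i + M u i)"
  by (simp add: poly_apply_pCons poly_apply_0 M_zero)

lemma poly_apply_quadratic: "poly_apply [:d, e, 1:] u = (\<lambda>i. d * u i + (e * M u i + M (M u) i))"
  by (simp add: poly_apply_pCons poly_apply_0 M_zero M_add M_scale)

text \<open>Krylov: the n+1 vectors u, Mu, ..., M^n u are dependent, so every vector is
  annihilated by a nonzero polynomial in M.\<close>
lemma annihilating_polynomial:
  assumes "supported n u"
  shows "\<exists>p. p \<noteq> 0 \<and> poly_apply p u = (\<lambda>_. 0)"
proof -
  obtain c where c: "\<exists>j\<in>{..n}. c j \<noteq> 0" "\<forall>i\<in>{..<n}. (\<Sum>j\<in>{..n}. (M ^^ j) u i * c j) = 0"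
    using homogeneous_system_nontrivial_solution[of "{..<n}" "{..n}" "\<lambda>i j. (M ^^ j) u i"]
    by auto
  define p where "p = (\<Sum>j\<in>{..n}. monom (c j) j)"
  have "coeff p j = c j" if "j \<le> n" for j
    using that unfolding p_def by (simp add: coeff_sum coeff_monom)
  then have "p \<noteq> 0" using c(1) by force
  moreover have "poly_apply p u i = 0" for i
  proof -
    have "poly_apply p u i = (\<Sum>j\<in>{..n}. c j * (M ^^ j) u i)"
      unfolding p_def by (simp add: poly_apply_sum poly_apply_monom)
    then show ?thesis
      using c(2) M_power_supported[OF assms] unfolding supported_def
      by (cases "i < n") (auto simp: mult.commute)
  qed
  ultimately show ?thesis by blast
qed

text \<open>Self-adjointness rules out non-real eigenvalues: for y \<noteq> 0 the quadratic
  (M - x)^2 + y^2 kills no nonzero vector, since its quadratic form is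
  |Mw - xw|^2 + y^2 |w|^2.\<close>
lemma quadratic_not_annihilating:
  assumes w: "supported n w" "w \<noteq> (\<lambda>_. 0)" and "y \<noteq> 0"
  shows "poly_apply [:x^2 + y^2, -2 * x, 1:] w \<noteq> (\<lambda>_. 0)"
proof
  assume kill: "poly_apply [:x^2 + y^2, -2 * x, 1:] w = (\<lambda>_. 0)"
  define m where "m = M w"
  have "0 = dot n w (poly_apply [:x^2 + y^2, -2 * x, 1:] w)"
    unfolding kill dot_def by simp
  also have "\<dots> = (x^2 + y^2) * dot n w w + (-2 * x * dot n m w + dot n (M m) w)"
    unfolding poly_apply_quadratic m_def
    by (subst dot_comm) (simp only: dot_add_left dot_scale_left)
  also have "dot n (M m) w = dot n m m"
    unfolding m_def by (simp add: M_self_adjoint)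
  finally have "0 = (x^2 + y^2) * dot n w w + (-2 * x * dot n m w + dot n m m)" .
  moreover have "dot n (\<lambda>i. m i - x * w i) (\<lambda>i. m i - x * w i)
      = dot n m m - 2 * x * dot n m w + x^2 * dot n w w"
  proof -
    have "(\<Sum>i<n. (m i - x * w i) * (m i - x * w i)) =
        (\<Sum>i<n. m i * m i - 2 * x * (m i * w i) + x^2 * (w i * w i))"
      by (rule sum.cong) (simp_all add: power2_eq_square algebra_simps)
    then show ?thesis unfolding dot_def by (simp add: sum.distrib sum_subtractf sum_distrib_left)
  qed
  ultimately have "dot n (\<lambda>i. m i - x * w i) (\<lambda>i. m i - x * w i) + y^2 * dot n w w = 0"
    by (simp add: algebra_simps)
  then show False
    using dot_self_nonneg[of n "\<lambda>i. m i - x * w i"] dot_self_pos[OF w] \<open>y \<noteq> 0\<close>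
    by (smt (verit) mult_pos_pos zero_less_power2)
qed

definition invariant_subspace :: "(nat \<Rightarrow> real) set \<Rightarrow> bool" where
  "invariant_subspace W \<longleftrightarrow> (\<forall>x\<in>W. supported n x) \<and> (\<forall>x\<in>W. \<forall>y\<in>W. (\<lambda>i. x i + y i) \<in> W) \<and>
     (\<forall>c. \<forall>x\<in>W. (\<lambda>i. c * x i) \<in> W) \<and> (\<forall>x\<in>W. M x \<in> W)"

lemma poly_apply_invariant:
  assumes "invariant_subspace W" "u \<in> W"
  shows "poly_apply p u \<in> W"
proof (induction p)
  case 0
  have "(\<lambda>i. 0 * u i) \<in> W" using assms unfolding invariant_subspace_def by blast
  then show ?case by (simp add: poly_apply_0)
next
  case (pCons c p)
  have summands: "(\<lambda>i. c * u i) \<in> W" "M (poly_apply p u) \<in> W"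
    using assms pCons.IH unfolding invariant_subspace_def by blast+
  have "\<forall>x\<in>W. \<forall>y\<in>W. (\<lambda>i. x i + y i) \<in> W" using assms unfolding invariant_subspace_def by blast
  from this[rule_format, OF summands] show ?case unfolding poly_apply_pCons .
qed

text \<open>Take a polynomial
  p of least degree annihilating some nonzero vector v of W; for any factorisation
  p = r q with r non-constant, w = q(M) v is a nonzero vector of W killed by r(M).
  Choosing r linear gives an eigenvector; r cannot be an irreducible quadratic.\<close>
lemma invariant_subspace_has_eigenvector:
  assumes W: "invariant_subspace W" and u: "u \<in> W" "u \<noteq> (\<lambda>_. 0)"
  shows "\<exists>w\<in>W. w \<noteq> (\<lambda>_. 0) \<and> (\<exists>r. M w = (\<lambda>i. r * w i))"
proof -
  have W_supported: "\<And>x. x \<in> W \<Longrightarrow> supported n x"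
    using W unfolding invariant_subspace_def by blast
  define kills where
    "kills q \<longleftrightarrow> q \<noteq> 0 \<and> (\<exists>v\<in>W. v \<noteq> (\<lambda>_. 0) \<and> poly_apply q v = (\<lambda>_. 0))" for q
  have "\<exists>q. kills q"
    using annihilating_polynomial[OF W_supported[OF u(1)]] u unfolding kills_def by blast
  then obtain p where p: "kills p" and p_min: "\<And>q. kills q \<Longrightarrow> Polynomial.degree p \<le> Polynomial.degree q"
    using ex_has_least_nat[of kills _ Polynomial.degree] by blast
  then obtain v where v: "v \<in> W" "v \<noteq> (\<lambda>_. 0)" "poly_apply p v = (\<lambda>_. 0)" and "p \<noteq> 0"
    unfolding kills_def by blast
  have factor_kills: "\<exists>w\<in>W. w \<noteq> (\<lambda>_. 0) \<and> poly_apply r w = (\<lambda>_. 0)"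
    if pq: "p = r * q" and r: "Polynomial.degree r \<noteq> 0" for r q
  proof (intro bexI conjI)
    have "q \<noteq> 0" "r \<noteq> 0" using \<open>p \<noteq> 0\<close> pq by auto
    then have "Polynomial.degree q < Polynomial.degree p"
      using pq r degree_mult_eq[of r q] by simp
    then show "poly_apply q v \<noteq> (\<lambda>_. 0)"
      using p_min[of q] \<open>q \<noteq> 0\<close> v(1,2) unfolding kills_def by force
    show "poly_apply r (poly_apply q v) = (\<lambda>_. 0)" using v(3) unfolding pq poly_apply_mult .
    show "poly_apply q v \<in> W" by (rule poly_apply_invariant[OF W v(1)])
  qed
  have "Polynomial.degree p \<noteq> 0"
  proof
    assume "Polynomial.degree p = 0"
    then obtain d where "p = [:d:]" by (metis degree_eq_zeroE)
    then have "d \<noteq> 0" "(\<lambda>i. d * v i) = (\<lambda>_. 0)"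
      using \<open>p \<noteq> 0\<close> v(3) by (auto simp: poly_apply_pCons poly_apply_0 M_zero)
    then show False using v(2) by (auto simp: fun_eq_iff)
  qed
  then show ?thesis
  proof (cases rule: real_poly_linear_or_quadratic_factor)
    case (1 r)
    then obtain q where "p = [:-r, 1:] * q" by (elim dvdE)
    from factor_kills[OF this] obtain w where "w \<in> W" "w \<noteq> (\<lambda>_. 0)"
      "poly_apply [:-r, 1:] w = (\<lambda>_. 0)" by auto
    then show ?thesis unfolding poly_apply_linear by (auto simp: fun_eq_iff)
  next
    case (2 x y)
    then obtain q where "p = [:x^2 + y^2, -2 * x, 1:] * q" by (elim dvdE)
    from factor_kills[OF this] show ?thesis
      using quadratic_not_annihilating[OF W_supported _ \<open>y \<noteq> 0\<close>] by auto
  qed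
qed

definition orthogonal_eigenvectors :: "nat \<Rightarrow> (nat \<Rightarrow> nat \<Rightarrow> real) \<Rightarrow> (nat \<Rightarrow> real) \<Rightarrow> bool" where
  "orthogonal_eigenvectors k V lam \<longleftrightarrow>
     (\<forall>j<k. supported n (V j) \<and> V j \<noteq> (\<lambda>_. 0) \<and> M (V j) = (\<lambda>i. lam j * V j i)) \<and>
     (\<forall>j<k. \<forall>l<k. j \<noteq> l \<longrightarrow> dot n (V j) (V l) = 0)"

abbreviation eigenbasis :: "(nat \<Rightarrow> nat \<Rightarrow> real) \<Rightarrow> (nat \<Rightarrow> real) \<Rightarrow> bool" where
  "eigenbasis \<equiv> orthogonal_eigenvectors n"

lemma orthogonal_complement_invariant:
  assumes "orthogonal_eigenvectors k V lam"
  shows "invariant_subspace {x. supported n x \<and> (\<forall>j<k. dot n x (V j) = 0)}"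
  unfolding invariant_subspace_def
proof (intro conjI ballI allI)
  fix x assume x: "x \<in> {x. supported n x \<and> (\<forall>j<k. dot n x (V j) = 0)}"
  have "dot n (M x) (V j) = 0" if "j < k" for j
  proof -
    have "dot n (M x) (V j) = dot n x (M (V j))" by (simp add: M_self_adjoint)
    also have "\<dots> = lam j * dot n x (V j)"
      using assms that unfolding orthogonal_eigenvectors_def by (simp add: dot_scale_right)
    finally show ?thesis using x that by simp
  qed
  then show "M x \<in> {x. supported n x \<and> (\<forall>j<k. dot n x (V j) = 0)}"
    by (auto simp: M_supported)
qed (auto simp: supported_add supported_scale dot_add_left dot_scale_left)

text \<open>Inductively, while k < n
  the orthogonal complement of the first k eigenvectors is a nonzero invariant
  subspace and hence contains a further eigenvector.\<close>
lemma orthogonal_eigenvectors_exist: "k \<le> n \<Longrightarrow> \<exists>V lam. orthogonal_eigenvectors k V lam"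
proof (induction k)
  case 0
  then show ?case by (auto simp: orthogonal_eigenvectors_def)
next
  case (Suc k)
  then obtain V lam where Vk: "orthogonal_eigenvectors k V lam" by auto
  define W where "W = {x. supported n x \<and> (\<forall>j<k. dot n x (V j) = 0)}"
  obtain c where c: "\<exists>i\<in>{..<n}. c i \<noteq> 0" "\<forall>j\<in>{..<k}. (\<Sum>i\<in>{..<n}. V j i * c i) = 0"
    using homogeneous_system_nontrivial_solution[of "{..<k}" "{..<n}" "\<lambda>j i. V j i"] Suc.prems
    by auto
  define u where "u i = (if i < n then c i else 0)" for i
  have "dot n u (V j) = (\<Sum>i<n. V j i * c i)" for j
    unfolding dot_def u_def by (intro sum.cong) auto
  then have "u \<in> W" "u \<noteq> (\<lambda>_. 0)"
    using c unfolding W_def u_def supported_def by (auto simp: fun_eq_iff)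
  then obtain w r where w: "w \<in> W" "w \<noteq> (\<lambda>_. 0)" "M w = (\<lambda>i. r * w i)"
    using invariant_subspace_has_eigenvector orthogonal_complement_invariant[OF Vk]
    unfolding W_def by blast
  have "orthogonal_eigenvectors (Suc k) (V(k := w)) (lam(k := r))"
    using Vk w unfolding orthogonal_eigenvectors_def W_def
    by (auto simp: less_Suc_eq dot_comm[of n w])
  then show ?case by blast
qed

lemma eigenbasis_exists: "\<exists>V lam. eigenbasis V lam"
  by (rule orthogonal_eigenvectors_exist) simp

lemma eigenbasisD:
  assumes "eigenbasis V lam" "j < n"
  shows "supported n (V j)" "M (V j) = (\<lambda>i. lam j * V j i)" "dot n (V j) (V j) > 0"
    and "\<And>l. l < n \<Longrightarrow> j \<noteq> l \<Longrightarrow> dot n (V j) (V l) = 0"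
  using assms dot_self_pos[of n "V j"] unfolding orthogonal_eigenvectors_def by auto
text \<open>Orthogonal expansion of an arbitrary vector in the eigenbasis: the residual
  would otherwise be an (n+1)-st nonzero vector orthogonal to the basis.\<close>
lemma eigenbasis_expansion:
  assumes B: "eigenbasis V lam" and x: "supported n x"
  shows "x = (\<lambda>i. \<Sum>j<n. (dot n x (V j) / dot n (V j) (V j)) * V j i)"
proof -
  define co where "co j = dot n x (V j) / dot n (V j) (V j)" for j
  define y where "y = (\<lambda>i. \<Sum>j<n. co j * V j i)"
  define r where "r = (\<lambda>i. x i - y i)"
  have "supported n y" unfolding y_def
    by (intro supported_sum supported_scale) (use eigenbasisD(1)[OF B] in auto)
  then have r_supported: "supported n r" unfolding r_def using x supported_def by simp
  have r_orth: "dot n r (V l) = 0" if l: "l < n" for l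
  proof -
    have "dot n y (V l) = (\<Sum>j<n. co j * dot n (V j) (V l))"
      unfolding y_def by (simp add: dot_sum_left dot_scale_left)
    also have "\<dots> = co l * dot n (V l) (V l)"
      using l eigenbasisD(4)[OF B] by (subst sum.remove[of _ l]) (auto intro!: sum.neutral)
    also have "\<dots> = dot n x (V l)"
      unfolding co_def using eigenbasisD(3)[OF B l] by simp
    finally show ?thesis unfolding r_def dot_diff_left by simp
  qed
  have "r = (\<lambda>_. 0)"
  proof (rule ccontr)
    assume "r \<noteq> (\<lambda>_. 0)"
    define w where "w j = (if j < n then V j else r)" for j
    have "card {..n} \<le> n"
    proof (rule orthogonal_family_card_le[of "{..n}" n w])
      show "supported n (w j) \<and> w j \<noteq> (\<lambda>_. 0)" if "j \<in> {..n}" for j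
        using B r_supported \<open>r \<noteq> (\<lambda>_. 0)\<close> unfolding w_def orthogonal_eigenvectors_def by auto
      show "dot n (w j) (w l) = 0" if "j \<in> {..n}" "l \<in> {..n}" "j \<noteq> l" for j l
      proof (cases "j < n")
        case True
        then show ?thesis using that r_orth eigenbasisD(4)[OF B] unfolding w_def
          by (cases "l < n") (auto simp: dot_comm[of n _ r])
      next
        case False
        then have "l < n" using that by auto
        then show ?thesis using that r_orth False unfolding w_def by (simp add: dot_comm[of n r])
      qed
    qed simp
    then show False by simp
  qed
  then show ?thesis unfolding r_def y_def co_def by (simp add: fun_eq_iff)
qed

lemma rayleigh_expansion:
  assumes B: "eigenbasis V lam" and x: "supported n x"
  shows "dot n x (M x) = (\<Sum>j<n. lam j * (dot n x (V j))^2 / dot n (V j) (V j))"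
    and "dot n x x = (\<Sum>j<n. (dot n x (V j))^2 / dot n (V j) (V j))"
proof -
  define co where "co j = dot n x (V j) / dot n (V j) (V j)" for j
  have co_sq: "co j * dot n (V j) x = (dot n x (V j))^2 / dot n (V j) (V j)" for j
    unfolding co_def by (simp add: dot_comm[of n "V j" x] power2_eq_square)
  have x_exp: "x = (\<lambda>i. \<Sum>j<n. co j * V j i)"
    unfolding co_def by (rule eigenbasis_expansion[OF B x])
  have "M x = (\<lambda>i. \<Sum>j<n. M (\<lambda>k. co j * V j k) i)"
    by (subst x_exp) (rule M_sum)
  also have "\<dots> = (\<lambda>i. \<Sum>j<n. lam j * co j * V j i)"
    by (intro ext sum.cong refl) (simp add: M_scale eigenbasisD(2)[OF B])
  finally have "dot n (M x) x = (\<Sum>j<n. lam j * (co j * dot n (V j) x))"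
    by (simp add: dot_sum_left dot_scale_left mult.assoc)
  then show "dot n x (M x) = (\<Sum>j<n. lam j * (dot n x (V j))^2 / dot n (V j) (V j))"
    by (simp add: dot_comm[of n x "M x"] co_sq)
  have "dot n x x = dot n (\<lambda>i. \<Sum>j<n. co j * V j i) x" by (subst (2) x_exp) (rule dot_comm)
  then show "dot n x x = (\<Sum>j<n. (dot n x (V j))^2 / dot n (V j) (V j))"
    by (simp add: dot_sum_left dot_scale_left co_sq)
qed

text \<open>The excess of the Rayleigh quotient of x over a threshold mu.  Counting
  eigenvalues above mu amounts to finding subspaces on which it has a sign.\<close>
definition excess :: "real \<Rightarrow> (nat \<Rightarrow> real) \<Rightarrow> real" where
  "excess \<mu> x = dot n x (M x) - \<mu> * dot n x x"

lemma excess_expansion: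
  assumes "eigenbasis V lam" "supported n x"
  shows "excess \<mu> x = (\<Sum>j<n. (lam j - \<mu>) * (dot n x (V j))^2 / dot n (V j) (V j))"
  unfolding excess_def rayleigh_expansion[OF assms]
  by (simp add: sum_distrib_left sum_subtractf[symmetric] diff_divide_distrib left_diff_distrib)

lemma excess_neg_below_threshold:
  assumes B: "eigenbasis V lam" and x: "supported n x" "x \<noteq> (\<lambda>_. 0)"
    and orth: "\<And>k. k < n \<Longrightarrow> \<mu> \<le> lam k \<Longrightarrow> dot n x (V k) = 0"
  shows "excess \<mu> x < 0"
proof -
  define t where "t k = (\<mu> - lam k) * (dot n x (V k))^2 / dot n (V k) (V k)" for k
  have "(\<Sum>k<n. (dot n x (V k))^2 / dot n (V k) (V k)) \<noteq> 0"
    using rayleigh_expansion(2)[OF B x(1)] dot_self_pos[OF x] by simp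
  then obtain k0 where k0: "k0 < n" "dot n x (V k0) \<noteq> 0"
    by (metis (no_types, lifting) lessThan_iff sum.neutral zero_power2 div_0)
  have t_nonneg: "t k \<ge> 0" if "k < n" for k
    using orth[OF that] eigenbasisD(3)[OF B that] unfolding t_def
    by (cases "\<mu> \<le> lam k") (auto intro!: divide_nonneg_pos mult_nonneg_nonneg)
  have "t k0 > 0"
    using orth[OF k0(1)] k0(2) eigenbasisD(3)[OF B k0(1)] unfolding t_def
    by (intro divide_pos_pos mult_pos_pos) (auto simp: not_le[symmetric])
  then have "0 < (\<Sum>k<n. t k)"
    using k0(1) t_nonneg by (intro sum_pos2[of _ k0]) auto
  moreover have "excess \<mu> x = - (\<Sum>k<n. t k)"
    unfolding excess_expansion[OF B x(1)] t_def sum_negf[symmetric]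
    by (intro sum.cong refl) (simp add: minus_divide_left algebra_simps)
  ultimately show ?thesis by simp
qed

text \<open>Lower bound (Courant-Fischer): if the excess is nonnegative on the span of
  an independent family, the family is no larger than the number of eigenvalues
  at least mu; otherwise a nonzero member of the span would be orthogonal to all
  those eigenvectors.\<close>
lemma card_eigenvalues_ge_lower_bound:
  assumes B: "eigenbasis V lam" and J: "finite J"
    and w: "\<And>j. j \<in> J \<Longrightarrow> supported n (w j)"
    and indep: "\<And>c. (\<forall>i<n. (\<Sum>j\<in>J. c j * w j i) = 0) \<Longrightarrow> (\<forall>j\<in>J. c j = 0)"
    and nonneg: "\<And>c. excess \<mu> (\<lambda>i. \<Sum>j\<in>J. c j * w j i) \<ge> 0"
  shows "card J \<le> card {k. k < n \<and> \<mu> \<le> lam k}"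
proof (rule ccontr)
  define S where "S = {k. k < n \<and> \<mu> \<le> lam k}"
  assume "\<not> card J \<le> card {k. k < n \<and> \<mu> \<le> lam k}"
  then obtain c where c: "\<exists>j\<in>J. c j \<noteq> 0" "\<forall>k\<in>S. (\<Sum>j\<in>J. dot n (w j) (V k) * c j) = 0"
    using homogeneous_system_nontrivial_solution[of S J "\<lambda>k j. dot n (w j) (V k)"] J
    unfolding S_def by auto
  define x where "x = (\<lambda>i. \<Sum>j\<in>J. c j * w j i)"
  have "supported n x" unfolding x_def by (intro supported_sum supported_scale w)
  moreover have "x \<noteq> (\<lambda>_. 0)" using indep[of c] c(1) unfolding x_def by (auto simp: fun_eq_iff)
  moreover have "dot n x (V k) = 0" if "k < n" "\<mu> \<le> lam k" for k
    using c(2) that unfolding x_def S_def by (simp add: dot_sum_left dot_scale_left mult.commute)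
  ultimately have "excess \<mu> x < 0" by (rule excess_neg_below_threshold[OF B])
  with nonneg[of c] show False unfolding x_def by simp
qed

lemma excess_on_eigenspan:
  assumes B: "eigenbasis V lam" and T: "T \<subseteq> {..<n}"
  shows "excess \<mu> (\<lambda>i. \<Sum>j\<in>T. c j * V j i) = (\<Sum>j\<in>T. (lam j - \<mu>) * (c j)^2 * dot n (V j) (V j))"
proof -
  define x where "x = (\<lambda>i. \<Sum>j\<in>T. c j * V j i)"
  have "finite T" using T finite_subset by blast
  have coord: "dot n x (V k) = (if k \<in> T then c k * dot n (V k) (V k) else 0)" if k: "k < n" for k
  proof -
    have "dot n x (V k) = (\<Sum>j\<in>T. c j * dot n (V j) (V k))"
      unfolding x_def by (simp add: dot_sum_left dot_scale_left)
    also have "\<dots> = (\<Sum>j\<in>T. if j = k then c k * dot n (V k) (V k) else 0)"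
      using T k eigenbasisD(4)[OF B] by (intro sum.cong refl) auto
    finally show ?thesis using \<open>finite T\<close> by simp
  qed
  have x_supported: "supported n x" unfolding x_def
    using T eigenbasisD(1)[OF B] by (intro supported_sum supported_scale) auto
  have "excess \<mu> x = (\<Sum>k<n. if k \<in> T then (lam k - \<mu>) * (c k)^2 * dot n (V k) (V k) else 0)"
    unfolding excess_expansion[OF B x_supported] using eigenbasisD(3)[OF B]
    by (intro sum.cong refl) (simp add: coord power2_eq_square)
  also have "\<dots> = (\<Sum>k\<in>T. (lam k - \<mu>) * (c k)^2 * dot n (V k) (V k))"
    using T by (simp add: sum.If_cases Int_absorb1)
  finally show ?thesis unfolding x_def .
qed

lemma exists_constrained_test_vector:
  assumes B: "eigenbasis V lam" and T: "T \<subseteq> {..<n}" and I: "finite I" "card I < card T"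
  obtains x where "supported n x" "x \<noteq> (\<lambda>_. 0)" "\<forall>i\<in>I. dot n x (u i) = 0"
    "(\<forall>j\<in>T. \<mu> \<le> lam j) \<Longrightarrow> excess \<mu> x \<ge> 0"
    "(\<forall>j\<in>T. \<mu> < lam j) \<Longrightarrow> excess \<mu> x > 0"
proof -
  have "finite T" using T finite_subset by blast
  then obtain c where c: "\<exists>j\<in>T. c j \<noteq> 0" "\<forall>i\<in>I. (\<Sum>j\<in>T. dot n (V j) (u i) * c j) = 0"
    using homogeneous_system_nontrivial_solution[of I T "\<lambda>i j. dot n (V j) (u i)"] I by auto
  then obtain j0 where j0: "j0 \<in> T" "c j0 \<noteq> 0" by blast
  define x where "x = (\<lambda>i. \<Sum>j\<in>T. c j * V j i)"
  have V: "\<And>j. j \<in> T \<Longrightarrow> supported n (V j) \<and> V j \<noteq> (\<lambda>_. 0)"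
    using B T unfolding orthogonal_eigenvectors_def by auto
  show ?thesis
  proof
    show "supported n x" unfolding x_def using V by (intro supported_sum supported_scale) auto
    show "x \<noteq> (\<lambda>_. 0)"
    proof
      assume "x = (\<lambda>_. 0)"
      then have "c j0 = 0"
        by (intro orthogonal_family_independent[of T n V c j0])
          (use \<open>finite T\<close> V T eigenbasisD(4)[OF B] j0 in \<open>auto simp: x_def fun_eq_iff subset_iff\<close>)
      with j0 show False by simp
    qed
    show "\<forall>i\<in>I. dot n x (u i) = 0"
      using c(2) unfolding x_def by (simp add: dot_sum_left dot_scale_left mult.commute)
    have terms: "(\<Sum>j\<in>T. (lam j - \<mu>) * (c j)^2 * dot n (V j) (V j)) = excess \<mu> x"
      unfolding x_def excess_on_eigenspan[OF B T] ..
    have pos: "dot n (V j) (V j) > 0" if "j \<in> T" for j using eigenbasisD(3)[OF B] T that by auto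
    show "excess \<mu> x \<ge> 0" if "\<forall>j\<in>T. \<mu> \<le> lam j"
      unfolding terms[symmetric] using that pos by (intro sum_nonneg) (simp add: less_imp_le)
    show "excess \<mu> x > 0" if "\<forall>j\<in>T. \<mu> < lam j"
      unfolding terms[symmetric] using that pos j0 \<open>finite T\<close>
      by (intro sum_pos2[of _ j0]) (auto simp: less_imp_le)
  qed
qed


text \<open>Any matrix with entries a has characteristic polynomial prod (X - lam j) for
  an eigenbasis V, lam: with P the matrix of eigenvectors and D = diag lam we have
  A = P D P^-1, where P^-1 has rows V j / |V j|^2 by orthogonality.\<close>
lemma char_poly_eigenbasis:
  fixes A :: "real mat"
  assumes A: "A \<in> carrier_mat n n" and entries: "\<And>i j. i < n \<Longrightarrow> j < n \<Longrightarrow> A $$ (i, j) = a i j"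
    and B: "eigenbasis V lam"
  shows "char_poly A = (\<Prod>x\<leftarrow>map lam [0..<n]. [:-x, 1:])"
proof -
  define P where "P = mat n n (\<lambda>(i, j). V j i)"
  define D where "D = mat n n (\<lambda>(i, j). if i = j then lam i else (0::real))"
  define Q where "Q = mat n n (\<lambda>(i, j). V i j / dot n (V i) (V i))"
  have P: "P \<in> carrier_mat n n" and D: "D \<in> carrier_mat n n" and Q: "Q \<in> carrier_mat n n"
    unfolding P_def D_def Q_def by auto
  have QP: "Q * P = 1\<^sub>m n"
  proof (rule eq_matI)
    fix i j assume "i < dim_row (1\<^sub>m n)" "j < dim_col (1\<^sub>m n)"
    then have i: "i < n" and j: "j < n" by auto
    have "(Q * P) $$ (i, j) = dot n (V i) (V j) / dot n (V i) (V i)"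
      using i j unfolding P_def Q_def dot_def
      by (simp add: scalar_prod_def atLeast0LessThan sum_divide_distrib algebra_simps)
    also have "\<dots> = 1\<^sub>m n $$ (i, j)"
      using eigenbasisD(3,4)[OF B i] j i by auto
    finally show "(Q * P) $$ (i, j) = 1\<^sub>m n $$ (i, j)" .
  qed (use P Q in auto)
  have PQ: "P * Q = 1\<^sub>m n" by (rule mat_mult_left_right_inverse[OF Q P QP])
  have AP: "A * P = P * D"
  proof (rule eq_matI)
    fix i j assume "i < dim_row (P * D)" "j < dim_col (P * D)"
    then have i: "i < n" and j: "j < n" using P D by auto
    have "(A * P) $$ (i, j) = M (V j) i"
      using i j A entries unfolding P_def matvec_def by (simp add: scalar_prod_def atLeast0LessThan)
    also have "\<dots> = (P * D) $$ (i, j)"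
      using i j eigenbasisD(2)[OF B j] unfolding P_def D_def
      by (simp add: scalar_prod_def atLeast0LessThan if_distrib[of "\<lambda>x. _ * x"] cong: if_cong)
    finally show "(A * P) $$ (i, j) = (P * D) $$ (i, j)" .
  qed (use A P D in auto)
  have "A = A * (P * Q)" using A by (simp add: PQ)
  also have "\<dots> = (A * P) * Q" using A P Q by (simp add: assoc_mult_mat)
  also have "\<dots> = P * D * Q" unfolding AP ..
  finally have "similar_mat A D"
    unfolding similar_mat_def similar_mat_wit_def Let_def using A P D Q PQ QP by blast
  then have "char_poly A = char_poly D" by (rule char_poly_similar)
  also have "\<dots> = (\<Prod>x\<leftarrow>diag_mat D. [:-x, 1:])"
    by (rule char_poly_upper_triangular[OF D]) (auto simp: upper_triangular_def D_def)
  also have "diag_mat D = map lam [0..<n]"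
    unfolding diag_mat_def D_def by auto
  finally show ?thesis .
qed

end

lemma proots_linear_product: "proots (\<Prod>x\<leftarrow>L. [:-x, 1::real:]) = mset L"
proof (induction L)
  case (Cons x L)
  have "(\<Prod>y\<leftarrow>L. [:-y, 1::real:]) \<noteq> 0" by (auto simp: prod_list_zero_iff)
  then show ?case using Cons by (simp add: proots_mult del: mult_pCons_left)
qed simp

lemma nonincreasing_threshold_count:
  fixes R :: "real list" and P :: "real \<Rightarrow> bool"
  assumes up: "\<And>x y. x \<le> y \<Longrightarrow> P x \<Longrightarrow> P y"
    and mono: "\<And>i j. i \<le> j \<Longrightarrow> j < length R \<Longrightarrow> R ! j \<le> R ! i"
    and k: "k < length R"
  shows "P (R ! k) \<longleftrightarrow> k < card {i. i < length R \<and> P (R ! i)}"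
proof
  assume "P (R ! k)"
  then have "{..k} \<subseteq> {i. i < length R \<and> P (R ! i)}"
    using mono k up by auto
  from card_mono[OF _ this] show "k < card {i. i < length R \<and> P (R ! i)}" by simp
next
  assume k_lt: "k < card {i. i < length R \<and> P (R ! i)}"
  show "P (R ! k)"
  proof (rule ccontr)
    assume "\<not> P (R ! k)"
    then have "{i. i < length R \<and> P (R ! i)} \<subseteq> {..<k}"
      using mono up by (auto simp: not_less[symmetric])
    from card_mono[OF _ this] k_lt show False by simp
  qed
qed

lemma kth_largest_eq_iff:
  fixes L :: "real list"
  assumes k: "k < length L"
  shows "rev (sort L) ! k = c \<longleftrightarrow>
    card {i. i < length L \<and> c < L ! i} \<le> k \<and> k < card {i. i < length L \<and> c \<le> L ! i}"
proof -
  define R where "R = rev (sort L)"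
  have mono: "R ! j \<le> R ! i" if "i \<le> j" "j < length R" for i j
    using that unfolding R_def by (auto simp: rev_nth intro: sorted_nth_mono)
  have count: "card {i. i < length R \<and> P (R ! i)} = card {i. i < length L \<and> P (L ! i)}" for P
  proof -
    have "mset R = mset L" unfolding R_def by simp
    then have "length (filter P R) = length (filter P L)"
      by (metis mset_filter size_mset)
    then show ?thesis by (simp add: length_filter_conv_card)
  qed
  have "length R = length L" unfolding R_def by simp
  then have "c < R ! k \<longleftrightarrow> k < card {i. i < length R \<and> c < R ! i}"
    and "c \<le> R ! k \<longleftrightarrow> k < card {i. i < length R \<and> c \<le> R ! i}"
    using k by (intro nonincreasing_threshold_count mono; force)+
  then show ?thesis
    unfolding R_def[symmetric] count by (auto simp: not_less[symmetric])
qed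

text \<open>The edge form sum over edges ij of (x_i + x_j)^2; it is the quadratic form
  of the signless Laplacian of the graph H.\<close>
definition edge_form :: "nat \<Rightarrow> (nat \<Rightarrow> nat \<Rightarrow> bool) \<Rightarrow> (nat \<Rightarrow> real) \<Rightarrow> real" where
  "edge_form n H x = (\<Sum>i<n. \<Sum>j<n. if H i j then (x i + x j)^2 else 0) / 2"

lemma edge_form_nonneg: "edge_form n H x \<ge> 0"
  unfolding edge_form_def by (intro divide_nonneg_pos sum_nonneg) auto

lemma edge_form_eq_0_iff:
  "edge_form n H x = 0 \<longleftrightarrow> (\<forall>i<n. \<forall>j<n. H i j \<longrightarrow> x i + x j = 0)"
proof -
  have "edge_form n H x = 0 \<longleftrightarrow> (\<forall>i\<in>{..<n}. \<forall>j\<in>{..<n}. H i j \<longrightarrow> x i + x j = 0)"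
    unfolding edge_form_def by (simp add: sum_nonneg_eq_0_iff sum_nonneg)
  then show ?thesis by blast
qed

locale graph =
  fixes n :: nat and E :: "nat \<Rightarrow> nat \<Rightarrow> bool"
  assumes simple: "simple_graph n E"
begin

abbreviation H where "H \<equiv> complement n E"

lemma H_sym: "H i j = H j i"
  using simple unfolding complement_def simple_graph_def by auto

lemma H_edge: "H i j \<Longrightarrow> i < n \<and> j < n \<and> i \<noteq> j"
  unfolding complement_def by auto

definition comp :: "nat \<Rightarrow> nat set" where
  "comp v = {u. H\<^sup>*\<^sup>* v u}"

lemma reachable_sym: "H\<^sup>*\<^sup>* u v \<Longrightarrow> H\<^sup>*\<^sup>* v u"
proof (induction rule: rtranclp_induct)
  case (step y z)
  then show ?case using H_sym by (metis converse_rtranclp_into_rtranclp)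
qed simp

lemma comp_self: "v \<in> comp v"
  unfolding comp_def by simp

lemma comp_eq: "u \<in> comp v \<Longrightarrow> comp u = comp v"
  unfolding comp_def using reachable_sym by (auto intro: rtranclp_trans)

lemma comp_edge: "H i j \<Longrightarrow> i \<in> comp j"
  unfolding comp_def using H_sym by auto

lemma components_eq: "components n H = comp ` {..<n}"
  unfolding components_def comp_def by auto

lemma finite_components: "finite (components n H)"
  unfolding components_eq by simp

lemma comp_in_components: "v < n \<Longrightarrow> comp v \<in> components n H"
  unfolding components_eq by simp

lemma component_subset: "C \<in> components n H \<Longrightarrow> C \<subseteq> {..<n}"
proof -
  have "H\<^sup>*\<^sup>* v u \<Longrightarrow> v < n \<Longrightarrow> u < n" for u v
    by (induction rule: rtranclp_induct) (auto dest: H_edge)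
  then show "C \<in> components n H \<Longrightarrow> C \<subseteq> {..<n}"
    unfolding components_eq comp_def by auto
qed

lemma finite_component: "C \<in> components n H \<Longrightarrow> finite C"
  using component_subset finite_subset by blast

lemma component_nonempty: "C \<in> components n H \<Longrightarrow> C \<noteq> {}"
  unfolding components_eq using comp_self by auto

lemma component_eq_comp: "C \<in> components n H \<Longrightarrow> u \<in> C \<Longrightarrow> C = comp u"
  unfolding components_eq using comp_eq by auto

lemma component_edge: "C \<in> components n H \<Longrightarrow> H i j \<Longrightarrow> i \<in> C \<longleftrightarrow> j \<in> C"
  using component_eq_comp comp_edge comp_self H_sym by metis

definition sides :: "nat set \<Rightarrow> nat set \<times> nat set" where
  "sides C = (SOME p. bipartition H C (fst p) (snd p) \<and>
     (balanced_comp H C \<longrightarrow> card (fst p) = card (snd p)))"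

definition side1 :: "nat set \<Rightarrow> nat set" where "side1 C = fst (sides C)"
definition side2 :: "nat set \<Rightarrow> nat set" where "side2 C = snd (sides C)"

lemma sides_bipartition:
  assumes "bipartite_comp H C"
  shows "bipartition H C (side1 C) (side2 C)"
    and "balanced_comp H C \<longleftrightarrow> card (side1 C) = card (side2 C)"
proof -
  have "\<exists>p. bipartition H C (fst p) (snd p) \<and> (balanced_comp H C \<longrightarrow> card (fst p) = card (snd p))"
    using assms unfolding balanced_comp_def bipartite_comp_def by (cases "balanced_comp H C") auto
  from someI_ex[OF this] have "bipartition H C (side1 C) (side2 C)"
    "balanced_comp H C \<longrightarrow> card (side1 C) = card (side2 C)"
    unfolding side1_def side2_def sides_def by auto
  then show "bipartition H C (side1 C) (side2 C)"
    and "balanced_comp H C \<longleftrightarrow> card (side1 C) = card (side2 C)"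
    unfolding balanced_comp_def by blast+
qed

lemma sides_partition:
  assumes "bipartite_comp H C"
  shows "side1 C \<union> side2 C = C" "side1 C \<inter> side2 C = {}"
    and "\<And>x y. x \<in> side1 C \<Longrightarrow> y \<in> side1 C \<Longrightarrow> \<not> H x y"
    and "\<And>x y. x \<in> side2 C \<Longrightarrow> y \<in> side2 C \<Longrightarrow> \<not> H x y"
  using sides_bipartition(1)[OF assms] unfolding bipartition_def by auto

lemma balanced_imp_bipartite: "balanced_comp H C \<Longrightarrow> bipartite_comp H C"
  unfolding balanced_comp_def bipartite_comp_def by blast

lemma finite_sides:
  assumes "C \<in> components n H" "bipartite_comp H C"
  shows "finite (side1 C)" "finite (side2 C)"
  using sides_partition(1)[OF assms(2)] finite_component[OF assms(1)] by (metis finite_Un)+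

lemma edge_crosses_sides:
  assumes C: "C \<in> components n H" "bipartite_comp H C" and "i \<in> C" and e: "H i j"
  shows "(i \<in> side1 C \<and> j \<in> side2 C) \<or> (i \<in> side2 C \<and> j \<in> side1 C)"
  using sides_partition[OF C(2)] component_edge[OF C(1) e] \<open>i \<in> C\<close> e by blast

text \<open>The signed indicator of a bipartite component: +1 on one side, -1 on the
  other, 0 elsewhere.  Every alternating vector (below) is a combination of these.\<close>
definition signed_indicator :: "nat set \<Rightarrow> nat \<Rightarrow> real" where
  "signed_indicator C = (\<lambda>i. if i \<in> side1 C then 1 else if i \<in> side2 C then -1 else 0)"

lemma signed_indicator_supported:
  assumes "C \<in> components n H" "bipartite_comp H C"
  shows "supported n (signed_indicator C)"
  using component_subset[OF assms(1)] sides_partition(1)[OF assms(2)]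
  unfolding supported_def signed_indicator_def by auto

lemma signed_indicator_outside:
  "bipartite_comp H C \<Longrightarrow> u \<notin> C \<Longrightarrow> signed_indicator C u = 0"
  unfolding signed_indicator_def using sides_partition(1) by auto

lemma signed_indicator_inside:
  "bipartite_comp H C \<Longrightarrow> v \<in> C \<Longrightarrow> signed_indicator C v \<noteq> 0"
  unfolding signed_indicator_def using sides_partition(1) by auto

lemma signed_indicator_edge:
  assumes C: "C \<in> components n H" "bipartite_comp H C" and e: "H i j"
  shows "signed_indicator C i + signed_indicator C j = 0"
proof (cases "i \<in> C")
  case True
  from edge_crosses_sides[OF C True e] sides_partition(2)[OF C(2)] show ?thesis
    unfolding signed_indicator_def by auto
next
  case False
  then show ?thesis using component_edge[OF C(1) e] signed_indicator_outside[OF C(2)] by simp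
qed

lemma signed_indicator_combination_at:
  assumes C: "C \<in> components n H" "v \<in> C" and B: "finite B" "C \<in> B"
    "B \<subseteq> {C. C \<in> components n H \<and> bipartite_comp H C}"
  shows "(\<Sum>D\<in>B. t D * signed_indicator D v) = t C * signed_indicator C v"
proof -
  have "signed_indicator D v = 0" if "D \<in> B - {C}" for D
    using that B(3) C component_eq_comp signed_indicator_outside by blast
  then show ?thesis using B by (simp add: sum.remove)
qed

definition ones :: "nat \<Rightarrow> real" where
  "ones = (\<lambda>i. if i < n then 1 else 0)"

lemma dot_signed_indicator:
  assumes C: "C \<in> components n H" "bipartite_comp H C"
  shows "dot n x (signed_indicator C) = (\<Sum>u\<in>side1 C. x u) - (\<Sum>u\<in>side2 C. x u)"
proof -
  have "side1 C \<subseteq> {..<n}" "side2 C \<subseteq> {..<n}"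
    using sides_partition(1)[OF C(2)] component_subset[OF C(1)] by auto
  moreover have "dot n x (signed_indicator C)
      = (\<Sum>u<n. (if u \<in> side1 C then x u else 0) - (if u \<in> side2 C then x u else 0))"
    unfolding dot_def signed_indicator_def using sides_partition(2)[OF C(2)]
    by (intro sum.cong) auto
  ultimately show ?thesis by (simp add: sum_subtractf sum.inter_restrict[symmetric] inf.absorb2)
qed

lemma dot_signed_indicator_ones:
  assumes C: "C \<in> components n H" "bipartite_comp H C"
  shows "dot n (signed_indicator C) ones = real (card (side1 C)) - real (card (side2 C))"
proof -
  have count: "(\<Sum>u\<in>S. ones u) = real (card S)" if "S \<subseteq> C" for S
    using that component_subset[OF C(1)] unfolding ones_def by (simp add: subset_iff)
  have "side1 C \<subseteq> C" "side2 C \<subseteq> C" using sides_partition(1)[OF C(2)] by auto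
  then show ?thesis
    using dot_signed_indicator[OF C, of ones] count by (simp add: dot_comm)
qed

lemma dot_restrict:
  assumes "C \<subseteq> {..<n}" "\<And>u. u \<notin> C \<Longrightarrow> x u = 0"
  shows "dot n x y = (\<Sum>u\<in>C. x u * y u)"
  unfolding dot_def using assms by (intro sum.mono_neutral_right) auto

text \<open>Alternating vectors, with x_i + x_j = 0 along every edge of H, form the
  kernel of the quadratic form of Q(H).\<close>
definition alternating :: "(nat \<Rightarrow> real) \<Rightarrow> bool" where
  "alternating x \<longleftrightarrow> (\<forall>i j. H i j \<longrightarrow> x i + x j = 0)"

lemma alternating_iff_edge_form: "alternating x \<longleftrightarrow> edge_form n H x = 0"
  unfolding alternating_def edge_form_eq_0_iff using H_edge by blast

lemma alternating_on_bipartite: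
  assumes x: "alternating x" and C: "C \<in> components n H" "bipartite_comp H C"
    and v: "v \<in> C" and u: "u \<in> C"
  shows "x u = signed_indicator C v * signed_indicator C u * x v"
proof -
  have "H\<^sup>*\<^sup>* v u" using u component_eq_comp[OF C(1) v] unfolding comp_def by simp
  then show ?thesis
  proof (induction rule: rtranclp_induct)
    case base
    have "signed_indicator C v * signed_indicator C v = 1"
      using v sides_partition(1,2)[OF C(2)] unfolding signed_indicator_def by auto
    then show ?case by simp
  next
    case (step u w)
    have "x w = - x u" "signed_indicator C w = - signed_indicator C u"
      using x signed_indicator_edge[OF C step.hyps(2)] step.hyps(2)
      unfolding alternating_def by (simp_all add: eq_neg_iff_add_eq_0 add.commute)
    then show ?case using step.IH by simp
  qed
qed

text \<open>On a non-bipartite component an alternating vector vanishes: otherwise the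
  signs of x would bipartition the component.\<close>
lemma alternating_on_nonbipartite:
  assumes x: "alternating x" and "v < n" and nb: "\<not> bipartite_comp H (comp v)"
  shows "x v = 0"
proof (rule ccontr)
  assume xv: "x v \<noteq> 0"
  have sign: "x u = x v \<or> x u = - x v" if "H\<^sup>*\<^sup>* v u" for u
    using that
  proof (induction rule: rtranclp_induct)
    case (step u w)
    then have "x w = - x u" using x unfolding alternating_def by (simp add: eq_neg_iff_add_eq_0 add.commute)
    then show ?case using step.IH by auto
  qed simp
  define X where "X = {u \<in> comp v. x u = x v}"
  define Y where "Y = {u \<in> comp v. x u = - x v}"
  have "bipartition H (comp v) X Y"
    unfolding bipartition_def
  proof (intro conjI ballI)
    show "X \<union> Y = comp v" unfolding X_def Y_def using sign unfolding comp_def by auto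
    show "X \<inter> Y = {}" unfolding X_def Y_def using xv by auto
  next
    fix p q assume "p \<in> X" "q \<in> X"
    then show "\<not> H p q" using x xv unfolding alternating_def X_def by force
  next
    fix p q assume "p \<in> Y" "q \<in> Y"
    then show "\<not> H p q" using x xv unfolding alternating_def Y_def by force
  qed
  then show False using nb unfolding bipartite_comp_def by blast
qed

lemma alternating_component_sums:
  assumes x: "alternating x" and C: "C \<in> components n H" "bipartite_comp H C" and v: "v \<in> C"
  shows "dot n x (signed_indicator C) = signed_indicator C v * x v * real (card C)"
    and "(\<Sum>u\<in>C. x u) = signed_indicator C v * x v * (real (card (side1 C)) - real (card (side2 C)))"
proof -
  note on_C = alternating_on_bipartite[OF x C v]
  have sq: "signed_indicator C u * signed_indicator C u = 1" if "u \<in> C" for u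
    using that sides_partition(1,2)[OF C(2)] unfolding signed_indicator_def by auto
  have "dot n x (signed_indicator C) = (\<Sum>u\<in>C. signed_indicator C u * x u)"
    unfolding dot_comm[of n x]
    by (rule dot_restrict[OF component_subset[OF C(1)]]) (simp add: signed_indicator_outside[OF C(2)])
  also have "\<dots> = (\<Sum>u\<in>C. signed_indicator C v * x v)"
    using on_C sq by (intro sum.cong refl) (simp add: algebra_simps)
  finally show "dot n x (signed_indicator C) = signed_indicator C v * x v * real (card C)"
    by simp
  have "(\<Sum>u\<in>C. x u) = signed_indicator C v * x v * (\<Sum>u\<in>C. signed_indicator C u)"
    using on_C by (simp add: sum_distrib_left mult_ac)
  also have "(\<Sum>u\<in>C. signed_indicator C u) = real (card (side1 C)) - real (card (side2 C))"
    using dot_signed_indicator_ones[OF C] dot_restrict[OF component_subset[OF C(1)],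
        of "signed_indicator C" ones] signed_indicator_outside[OF C(2)] component_subset[OF C(1)]
    unfolding ones_def by (auto simp: subset_iff)
  finally show "(\<Sum>u\<in>C. x u) = signed_indicator C v * x v * (real (card (side1 C)) - real (card (side2 C)))" .
qed

lemma alternating_vanishes:
  assumes x: "alternating x" and v: "v < n"
    and orth: "bipartite_comp H (comp v) \<Longrightarrow> dot n x (signed_indicator (comp v)) = 0"
  shows "x v = 0"
proof (cases "bipartite_comp H (comp v)")
  case False
  then show ?thesis using alternating_on_nonbipartite[OF x v] by simp
next
  case True
  have C: "comp v \<in> components n H" using comp_in_components[OF v] .
  have "card (comp v) > 0"
    using finite_component[OF C] comp_self[of v] card_gt_0_iff by blast
  then show ?thesis
    using alternating_component_sums(1)[OF x C True comp_self] orth[OF True]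
      signed_indicator_inside[OF True comp_self] by simp
qed

definition adj :: "nat \<Rightarrow> nat \<Rightarrow> real" where
  "adj i j = (if E i j then 1 else 0)"

definition Q :: "nat \<Rightarrow> nat \<Rightarrow> real" where
  "Q = (\<lambda>i j. if i < n \<and> j < n then signless_laplacian n E $$ (i, j) else 0)"

lemma Q_entry: "i < n \<Longrightarrow> j < n \<Longrightarrow> Q i j = adj i j + (if i = j then (\<Sum>k<n. adj i k) else 0)"
proof -
  assume "i < n" "j < n"
  moreover have "(\<Sum>k<n. adj i k) = (\<Sum>k\<in>{k\<in>{..<n}. E i k}. 1)"
    unfolding adj_def by (rule sum.inter_filter[symmetric]) simp
  then have "real (degree n E i) = (\<Sum>k<n. adj i k)"
    unfolding degree_def by (simp add: atLeast0LessThan)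
  ultimately show ?thesis unfolding Q_def signless_laplacian_def adj_def by (cases "i = j") simp_all
qed

lemma adj_complement:
  "i < n \<Longrightarrow> j < n \<Longrightarrow> adj i j = 1 - (if H i j then 1 else 0) - (if i = j then 1 else 0)"
  using simple unfolding adj_def complement_def simple_graph_def by auto

lemma Q_symmetric_operator: "symmetric_operator n Q"
proof
  show "Q i j = Q j i" for i j
    using simple Q_entry[of i j] Q_entry[of j i] unfolding Q_def simple_graph_def adj_def
    by (cases "i < n \<and> j < n") auto
qed (simp add: Q_def)

end

sublocale graph \<subseteq> symmetric_operator n Q
  by (rule Q_symmetric_operator)

context graph
begin

lemma edge_form_expand:
  "edge_form n H x = (\<Sum>i<n. \<Sum>j<n. (if H i j then 1 else 0) * (x i * x j + x i * x i))"
proof -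
  define h where "h i j = (if H i j then 1 else 0 :: real)" for i j
  have "2 * edge_form n H x = (\<Sum>i<n. \<Sum>j<n. h i j * (x i * x i) + 2 * (h i j * (x i * x j)) + h i j * (x j * x j))"
    unfolding edge_form_def h_def by (auto intro!: sum.cong simp: power2_eq_square algebra_simps)
  also have "\<dots> = (\<Sum>i<n. \<Sum>j<n. h i j * (x i * x i)) + 2 * (\<Sum>i<n. \<Sum>j<n. h i j * (x i * x j))
      + (\<Sum>i<n. \<Sum>j<n. h i j * (x j * x j))"
    by (simp add: sum.distrib sum_distrib_left)
  also have "(\<Sum>i<n. \<Sum>j<n. h i j * (x j * x j)) = (\<Sum>i<n. \<Sum>j<n. h i j * (x i * x i))"
    by (subst sum.swap) (simp add: h_def H_sym)
  finally have "2 * edge_form n H x = 2 * (\<Sum>i<n. \<Sum>j<n. h i j * (x i * x j + x i * x i))"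
    by (simp add: sum.distrib sum_distrib_left algebra_simps)
  then show ?thesis unfolding h_def by simp
qed

text \<open>The key identity: since Q(G) + Q(H) = (n-2) I + J, the excess of Q(G) over
  n-2 is (sum x)^2 minus the quadratic form of Q(H).\<close>
lemma excess_identity: "excess (real n - 2) x = (dot n x ones)^2 - edge_form n H x"
proof -
  define h where "h i j = (if H i j then 1 else 0 :: real)" for i j
  have row: "x i * (\<Sum>j<n. Q i j * x j)
      = x i * (\<Sum>j<n. x j) + real n * (x i * x i) - (\<Sum>j<n. h i j * (x i * x j + x i * x i))
        - 2 * (x i * x i)" if i: "i < n" for i
  proof -
    have "x i * (\<Sum>j<n. Q i j * x j) = (\<Sum>j<n. adj i j * (x i * x j))
        + (\<Sum>j<n. (if i = j then (\<Sum>k<n. adj i k) else 0) * (x i * x j))"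
      using i by (simp add: Q_entry sum_distrib_left algebra_simps sum.distrib)
    also have "(\<Sum>j<n. (if i = j then (\<Sum>k<n. adj i k) else 0) * (x i * x j))
        = (\<Sum>k<n. adj i k) * (x i * x i)"
      using i by (simp add: if_distrib[of "\<lambda>y. y * _"] cong: if_cong)
    also have "(\<Sum>j<n. adj i j * (x i * x j)) + (\<Sum>k<n. adj i k) * (x i * x i)
        = (\<Sum>j<n. adj i j * (x i * x j + x i * x i))"
      by (simp add: sum_distrib_left sum_distrib_right sum.distrib algebra_simps)
    also have "\<dots> = (\<Sum>j<n. (x i * x j + x i * x i) - h i j * (x i * x j + x i * x i)
        - (if i = j then 1 else 0) * (x i * x j + x i * x i))"
      using i by (intro sum.cong refl) (simp add: adj_complement h_def algebra_simps)
    also have "\<dots> = x i * (\<Sum>j<n. x j) + real n * (x i * x i)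
        - (\<Sum>j<n. h i j * (x i * x j + x i * x i)) - 2 * (x i * x i)"
      using i by (simp add: sum_subtractf sum.distrib sum_distrib_left
          if_distrib[of "\<lambda>y. y * _"] cong: if_cong)
    finally show ?thesis .
  qed
  have "dot n x (M x) = (\<Sum>i<n. x i * (\<Sum>j<n. x j) + real n * (x i * x i)
      - (\<Sum>j<n. h i j * (x i * x j + x i * x i)) - 2 * (x i * x i))"
    unfolding dot_def matvec_def by (intro sum.cong refl) (simp add: row)
  also have "\<dots> = (\<Sum>i<n. x i) * (\<Sum>j<n. x j) + real n * dot n x x - edge_form n H x - 2 * dot n x x"
    unfolding edge_form_expand dot_def h_def
    by (simp add: sum_subtractf sum.distrib sum_distrib_left sum_distrib_right) (simp add: mult.commute)
  moreover have "dot n x ones = (\<Sum>i<n. x i)" unfolding dot_def ones_def by simp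
  ultimately show ?thesis unfolding excess_def by (simp add: power2_eq_square algebra_simps)
qed

abbreviation Bip where "Bip \<equiv> {C \<in> components n H. bipartite_comp H C}"
abbreviation Bal where "Bal \<equiv> {C \<in> components n H. balanced_comp H C}"

lemma finite_Bip: "finite Bip"
  using finite_components by simp

lemma Bal_subset_Bip: "Bal \<subseteq> Bip"
  using balanced_imp_bipartite by auto

lemma signed_indicator_combination_alternating:
  assumes "B \<subseteq> Bip"
  shows "alternating (\<lambda>i. \<Sum>C\<in>B. c C * signed_indicator C i)"
  unfolding alternating_def
proof (intro allI impI)
  fix i j assume "H i j"
  then have "(\<Sum>C\<in>B. c C * (signed_indicator C i + signed_indicator C j)) = 0"
    using assms signed_indicator_edge by (intro sum.neutral) auto
  then show "(\<Sum>C\<in>B. c C * signed_indicator C i) + (\<Sum>C\<in>B. c C * signed_indicator C j) = 0"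
    by (simp add: sum.distrib algebra_simps)
qed

lemma excess_orthogonal_ones:
  "dot n x ones = 0 \<Longrightarrow> excess (real n - 2) x = - edge_form n H x"
  by (simp add: excess_identity)

lemma card_eigenvalues_gt_le_1:
  assumes B: "eigenbasis V lam"
  shows "card {j. j < n \<and> real n - 2 < lam j} \<le> 1"
proof (rule ccontr)
  define T where "T = {j. j < n \<and> real n - 2 < lam j}"
  assume "\<not> card {j. j < n \<and> real n - 2 < lam j} \<le> 1"
  then have "card {()} < card T" unfolding T_def by simp
  then obtain x where "dot n x ones = 0" "excess (real n - 2) x > 0"
    using exists_constrained_test_vector[OF B, of T "{()}" "\<lambda>_. ones" "real n - 2"]
    unfolding T_def by auto
  then show False using excess_orthogonal_ones edge_form_nonneg[of n H x] by simp
qed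

lemma card_eigenvalues_ge_upper_bound:
  assumes B: "eigenbasis V lam" and S: "finite S"
    and vanish: "\<And>x. supported n x \<Longrightarrow> alternating x \<Longrightarrow> dot n x ones = 0 \<Longrightarrow>
      (\<forall>C\<in>S. dot n x (signed_indicator C) = 0) \<Longrightarrow> x = (\<lambda>_. 0)"
  shows "card {j. j < n \<and> real n - 2 \<le> lam j} \<le> card S + 1"
proof (rule ccontr)
  define T where "T = {j. j < n \<and> real n - 2 \<le> lam j}"
  define I where "I = insert None (Some ` S)"
  define u where "u i = (case i of None \<Rightarrow> ones | Some C \<Rightarrow> signed_indicator C)" for i
  assume "\<not> card {j. j < n \<and> real n - 2 \<le> lam j} \<le> card S + 1"
  moreover have "card I = card S + 1" unfolding I_def using S by (simp add: card_image)
  ultimately have "card I < card T" unfolding T_def by simp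
  then obtain x where x: "supported n x" "x \<noteq> (\<lambda>_. 0)" "\<forall>i\<in>I. dot n x (u i) = 0"
    and "excess (real n - 2) x \<ge> 0"
    using exists_constrained_test_vector[OF B, of T I u "real n - 2"] S
    unfolding T_def I_def by auto
  moreover have "dot n x ones = 0" "\<forall>C\<in>S. dot n x (signed_indicator C) = 0"
    using x(3) unfolding I_def u_def by auto
  ultimately have "alternating x"
    using excess_orthogonal_ones edge_form_nonneg[of n H x] alternating_iff_edge_form by simp
  then show False using vanish x \<open>dot n x ones = 0\<close> \<open>\<forall>C\<in>S. _\<close> by blast
qed

lemma card_eigenvalues_ge_le_Bip_plus_1:
  assumes B: "eigenbasis V lam"
  shows "card {j. j < n \<and> real n - 2 \<le> lam j} \<le> card Bip + 1"
proof (rule card_eigenvalues_ge_upper_bound[OF B finite_Bip])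
  fix x assume x: "supported n x" "alternating x"
    and orth: "\<forall>C\<in>Bip. dot n x (signed_indicator C) = 0"
  show "x = (\<lambda>_. 0)"
  proof
    fix v
    show "x v = 0"
    proof (cases "v < n")
      case True
      then show ?thesis
        by (rule alternating_vanishes[OF x(2)]) (use orth comp_in_components[OF True] in auto)
    qed (use x(1) in \<open>simp add: supported_def\<close>)
  qed
qed

text \<open>If some bipartite component C0 is unbalanced, at most |Bip| eigenvalues are
  at least n - 2: the constraint for C0 may be dropped, because an alternating
  vector living on C0 sums to a nonzero multiple of |X| - |Y|.\<close>
lemma card_eigenvalues_ge_le_Bip_if_unbalanced:
  assumes B: "eigenbasis V lam" and C0: "C0 \<in> Bip" "\<not> balanced_comp H C0"
  shows "card {j. j < n \<and> real n - 2 \<le> lam j} \<le> card Bip"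
proof -
  have C0c: "C0 \<in> components n H" "bipartite_comp H C0" using C0 by auto
  have "card {j. j < n \<and> real n - 2 \<le> lam j} \<le> card (Bip - {C0}) + 1"
  proof (rule card_eigenvalues_ge_upper_bound[OF B])
    fix x assume x: "supported n x" "alternating x" "dot n x ones = 0"
      and orth: "\<forall>C\<in>Bip - {C0}. dot n x (signed_indicator C) = 0"
    have outside: "x v = 0" if "v \<notin> C0" for v
    proof (cases "v < n")
      case True
      moreover have "comp v \<noteq> C0" using that comp_self[of v] by auto
      ultimately show ?thesis
        by (intro alternating_vanishes[OF x(2)]) (use orth comp_in_components[OF True] in auto)
    qed (use x(1) in \<open>simp add: supported_def\<close>)
    have "(\<Sum>u\<in>C0. x u) = 0"
      using x(3) dot_restrict[OF component_subset[OF C0c(1)], of x ones] outside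
        component_subset[OF C0c(1)] unfolding ones_def by (auto simp: subset_iff)
    then have "x v = 0" if "v \<in> C0" for v
      using alternating_component_sums(2)[OF x(2) C0c that] signed_indicator_inside[OF C0c(2) that]
        sides_bipartition(2)[OF C0c(2)] C0(2) by simp
    with outside show "x = (\<lambda>_. 0)" by auto
  qed (simp add: finite_Bip)
  also have "card (Bip - {C0}) + 1 = card Bip"
  proof -
    have "card Bip > 0" using C0(1) finite_Bip card_gt_0_iff by blast
    then show ?thesis using card_Diff_singleton[OF C0(1)] by simp
  qed
  finally show ?thesis .
qed

lemma signed_indicators_independent:
  assumes B: "B \<subseteq> Bip" and comb: "\<forall>i<n. f i + (\<Sum>C\<in>B. c C * signed_indicator C i) = 0"
    and C: "C \<in> B" and v: "v \<in> C" and f: "f v = 0"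
  shows "c C = 0"
proof -
  have Cc: "C \<in> components n H" "bipartite_comp H C" using B C by auto
  have "v < n" using component_subset[OF Cc(1)] v by auto
  moreover have "(\<Sum>D\<in>B. c D * signed_indicator D v) = c C * signed_indicator C v"
    using B C finite_Bip finite_subset
    by (intro signed_indicator_combination_at[OF Cc(1) v]) auto
  ultimately have "c C * signed_indicator C v = 0" using comb f by force
  then show ?thesis using signed_indicator_inside[OF Cc(2) v] by simp
qed

text \<open>Lower bound: the signed indicators of the bipartite components span a
  |Bip|-dimensional space of alternating vectors, on which the excess over n - 2
  is a square.\<close>
lemma card_Bip_le_eigenvalues_ge:
  assumes B: "eigenbasis V lam"
  shows "card Bip \<le> card {j. j < n \<and> real n - 2 \<le> lam j}"
proof (rule card_eigenvalues_ge_lower_bound[OF B finite_Bip])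
  show "supported n (signed_indicator C)" if "C \<in> Bip" for C
    using signed_indicator_supported that by auto
  show "\<forall>C\<in>Bip. c C = 0" if "\<forall>i<n. (\<Sum>C\<in>Bip. c C * signed_indicator C i) = 0" for c
  proof
    fix C assume C: "C \<in> Bip"
    then obtain v where "v \<in> C" using component_nonempty by blast
    then show "c C = 0"
      using signed_indicators_independent[of Bip "\<lambda>_. 0"] that C by auto
  qed
  show "excess (real n - 2) (\<lambda>i. \<Sum>C\<in>Bip. c C * signed_indicator C i) \<ge> 0" for c
    using signed_indicator_combination_alternating[of Bip c]
    by (simp add: excess_identity alternating_iff_edge_form)
qed

definition side_indicator :: "nat set \<Rightarrow> nat \<Rightarrow> real" where
  "side_indicator C i = (if i \<in> side1 C then 1 else 0)"

text \<open>Adding s times a side indicator to an alternating vector, only the edges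
  between the two sides of C0 (at most |X| |Y| of them) contribute to the edge
  form, each contributing s^2.\<close>
lemma edge_form_side_indicator_bound:
  fixes s :: real
  assumes C0: "C0 \<in> components n H" "bipartite_comp H C0" and y: "alternating y"
  shows "edge_form n H (\<lambda>i. s * side_indicator C0 i + y i)
    \<le> s^2 * (real (card (side1 C0)) * real (card (side2 C0)))"
proof -
  define x where "x i = s * side_indicator C0 i + y i" for i
  define ind :: "nat set \<Rightarrow> nat \<Rightarrow> real" where "ind S i = (if i \<in> S then 1 else 0)" for S i
  define X where "X = side1 C0"
  define Y where "Y = side2 C0"
  have XY: "X \<union> Y = C0" "X \<inter> Y = {}" "X \<subseteq> {..<n}" "Y \<subseteq> {..<n}"
    using sides_partition(1,2)[OF C0(2)] component_subset[OF C0(1)] unfolding X_def Y_def by auto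
  have sum_ind: "(\<Sum>i<n. ind S i) = real (card S)" if "S \<subseteq> {..<n}" for S
    using that unfolding ind_def by (simp add: sum.If_cases inf.absorb1 Int_commute)
  have edge_term: "(if H i j then (x i + x j)^2 else 0) \<le> s^2 * (ind X i * ind Y j + ind Y i * ind X j)"
    for i j
  proof (cases "H i j")
    case True
    then have xij: "x i + x j = s * (ind X i + ind X j)"
      using y unfolding x_def X_def ind_def side_indicator_def alternating_def
      by (simp add: algebra_simps)
    show ?thesis
    proof (cases "i \<in> C0")
      case True
      with edge_crosses_sides[OF C0 True \<open>H i j\<close>] XY(2)
      show ?thesis unfolding xij ind_def X_def Y_def using \<open>H i j\<close> by auto
    next
      case False
      then have "i \<notin> X" "j \<notin> X" using component_edge[OF C0(1) \<open>H i j\<close>] XY(1) by auto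
      then show ?thesis unfolding xij ind_def using \<open>H i j\<close> by simp
    qed
  qed (simp add: ind_def)
  have "edge_form n H x \<le> (\<Sum>i<n. \<Sum>j<n. s^2 * (ind X i * ind Y j + ind Y i * ind X j)) / 2"
    unfolding edge_form_def using edge_term by (intro divide_right_mono sum_mono) auto
  also have "\<dots> = s^2 * ((\<Sum>i<n. \<Sum>j<n. ind X i * ind Y j) + (\<Sum>i<n. \<Sum>j<n. ind Y i * ind X j)) / 2"
    by (simp only: distrib_left sum.distrib sum_distrib_left)
  also have "\<dots> = s^2 * (real (card X) * real (card Y))"
    using sum_ind[OF XY(3)] sum_ind[OF XY(4)]
    by (simp add: sum_product[symmetric] mult.commute[of "real (card Y)"])
  finally show ?thesis unfolding x_def X_def Y_def .
qed

text \<open>For a balanced bipartite component C0 the excess over n - 2 is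
  nonnegative on s 1_X + y for every alternating y orthogonal to the all-ones
  vector, since (sum x)^2 = s^2 |X|^2 = s^2 |X| |Y| bounds the edge form.\<close>
lemma excess_nonneg_balanced:
  fixes s :: real
  assumes C0: "C0 \<in> components n H" "bipartite_comp H C0" "card (side1 C0) = card (side2 C0)"
    and y: "alternating y" "dot n y ones = 0"
  shows "excess (real n - 2) (\<lambda>i. s * side_indicator C0 i + y i) \<ge> 0"
proof -
  have "side1 C0 \<subseteq> {..<n}"
    using sides_partition(1)[OF C0(2)] component_subset[OF C0(1)] by auto
  then have "dot n (side_indicator C0) ones = real (card (side1 C0))"
    unfolding dot_def side_indicator_def ones_def by (simp add: sum.If_cases inf.absorb2)
  then have "dot n (\<lambda>i. s * side_indicator C0 i + y i) ones = s * real (card (side1 C0))"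
    using y(2) by (simp add: dot_add_left dot_scale_left)
  then show ?thesis
    using edge_form_side_indicator_bound[OF C0(1,2) y(1), of s] C0(3)
    by (simp add: excess_identity power2_eq_square mult_ac)
qed

text \<open>If C0 is balanced, its side indicator together with the signed indicators
  of all bipartite components is linearly independent: evaluate a vanishing
  combination at a vertex of each other component, then at a vertex of the
  second side of C0, then at one of the first side.\<close>
lemma side_indicator_signed_indicators_independent:
  assumes C0: "C0 \<in> Bip" "card (side1 C0) = card (side2 C0)"
    and comb: "\<forall>i<n. d * side_indicator C0 i + (\<Sum>C\<in>Bip. c C * signed_indicator C i) = 0"
  shows "d = 0" "\<forall>C\<in>Bip. c C = 0"
proof -
  have C0c: "C0 \<in> components n H" "bipartite_comp H C0" using C0 by auto
  note parts = sides_partition(1,2)[OF C0c(2)]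
  have "side1 C0 \<noteq> {}" "side2 C0 \<noteq> {}"
    using C0(2) finite_sides[OF C0c] parts(1) component_nonempty[OF C0c(1)] by auto
  then obtain p q where p: "p \<in> side1 C0" and q: "q \<in> side2 C0" by blast
  have other: "c C = 0" if C: "C \<in> Bip" "C \<noteq> C0" for C
  proof -
    obtain v where v: "v \<in> C" using C component_nonempty by blast
    then have "v \<notin> C0" using C C0 component_eq_comp by blast
    then have "v \<notin> side1 C0" using parts(1) by auto
    then show ?thesis
      using signed_indicators_independent[OF _ comb C(1) v] unfolding side_indicator_def by auto
  qed
  have "q \<notin> side1 C0" "q \<in> C0" using q parts by auto
  then have c0: "c C0 = 0"
    using signed_indicators_independent[OF _ comb C0(1)] unfolding side_indicator_def by auto
  have "p < n" using p parts(1) component_subset[OF C0c(1)] by auto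
  moreover have "(\<Sum>C\<in>Bip. c C * signed_indicator C p) = 0"
    using other c0 by (intro sum.neutral) auto
  ultimately show "d = 0" using comb p unfolding side_indicator_def by auto
  show "\<forall>C\<in>Bip. c C = 0" using other c0 by auto
qed

text \<open>If all bipartite components are balanced and there is one, C0, then at
  least |Bip| + 1 eigenvalues are at least n - 2: adjoin the side indicator of
  C0 to the signed indicators.\<close>
lemma card_Bip_plus_1_le_eigenvalues_ge:
  assumes B: "eigenbasis V lam" and all_balanced: "Bal = Bip" and C0: "C0 \<in> Bip"
  shows "card Bip + 1 \<le> card {j. j < n \<and> real n - 2 \<le> lam j}"
proof -
  have balanced: "card (side1 C) = card (side2 C)" if "C \<in> Bip" for C
    using that all_balanced sides_bipartition(2) by blast
  define J where "J = insert None (Some ` Bip)"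
  define w where "w j = (case j of None \<Rightarrow> side_indicator C0 | Some C \<Rightarrow> signed_indicator C)" for j
  have comb: "(\<Sum>j\<in>J. c j * w j i)
      = c None * side_indicator C0 i + (\<Sum>C\<in>Bip. c (Some C) * signed_indicator C i)" for c i
    unfolding J_def w_def using finite_Bip by (simp add: sum.reindex)
  have "card J \<le> card {j. j < n \<and> real n - 2 \<le> lam j}"
  proof (rule card_eigenvalues_ge_lower_bound[OF B])
    show "finite J" unfolding J_def using finite_Bip by simp
    have "side1 C0 \<subseteq> {..<n}"
      using C0 sides_partition(1) component_subset by blast
    then show "supported n (w j)" if "j \<in> J" for j
      using that signed_indicator_supported
      unfolding J_def w_def side_indicator_def supported_def by (auto simp: subset_iff)
  next
    fix c assume "\<forall>i<n. (\<Sum>j\<in>J. c j * w j i) = 0"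
    then have "\<forall>i<n. c None * side_indicator C0 i + (\<Sum>C\<in>Bip. c (Some C) * signed_indicator C i) = 0"
      unfolding comb .
    from side_indicator_signed_indicators_independent[OF C0 balanced[OF C0] this]
    show "\<forall>j\<in>J. c j = 0" unfolding J_def by auto
  next
    fix c
    define y where "y i = (\<Sum>C\<in>Bip. c (Some C) * signed_indicator C i)" for i
    have "alternating y"
      unfolding y_def by (rule signed_indicator_combination_alternating) simp
    moreover have "dot n y ones = 0"
      unfolding y_def by (simp add: dot_sum_left dot_scale_left dot_signed_indicator_ones balanced)
    ultimately show "excess (real n - 2) (\<lambda>i. \<Sum>j\<in>J. c j * w j i) \<ge> 0"
      unfolding comb y_def using C0 balanced[OF C0] by (intro excess_nonneg_balanced) auto
  qed
  moreover have "card J = card Bip + 1"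
    unfolding J_def using finite_Bip by (simp add: card_image)
  ultimately show ?thesis by simp
qed

lemma card_eigenvalues_ge_iff:
  assumes B: "eigenbasis V lam" and "1 \<le> k"
  shows "k + 1 \<le> card {j. j < n \<and> real n - 2 \<le> lam j} \<longleftrightarrow> k \<le> card Bal \<or> k + 1 \<le> card Bip"
proof (cases "Bal = Bip")
  case True
  show ?thesis
  proof
    assume "k + 1 \<le> card {j. j < n \<and> real n - 2 \<le> lam j}"
    then show "k \<le> card Bal \<or> k + 1 \<le> card Bip"
      using card_eigenvalues_ge_le_Bip_plus_1[OF B] True by simp
  next
    assume "k \<le> card Bal \<or> k + 1 \<le> card Bip"
    then have "k \<le> card Bip" using True by auto
    then have "card Bip \<noteq> 0" using \<open>1 \<le> k\<close> by linarith
    then obtain C0 where "C0 \<in> Bip" by (metis card.empty ex_in_conv)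
    then show "k + 1 \<le> card {j. j < n \<and> real n - 2 \<le> lam j}"
      using card_Bip_plus_1_le_eigenvalues_ge[OF B True \<open>C0 \<in> Bip\<close>] \<open>k \<le> card Bip\<close> by simp
  qed
next
  case False
  then obtain C0 where "C0 \<in> Bip" "\<not> balanced_comp H C0" using Bal_subset_Bip by blast
  then have "card {j. j < n \<and> real n - 2 \<le> lam j} = card Bip"
    using card_eigenvalues_ge_le_Bip_if_unbalanced[OF B] card_Bip_le_eigenvalues_ge[OF B]
    by (simp add: le_antisym)
  moreover have "card Bal < card Bip"
    using False Bal_subset_Bip finite_Bip by (simp add: psubset_card_mono psubset_eq)
  ultimately show ?thesis by arith
qed

lemma q_eig_eq_iff:
  assumes B: "eigenbasis V lam" and "k < n"
  shows "q_eig n E (k + 1) = c \<longleftrightarrow>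
    card {j. j < n \<and> c < lam j} \<le> k \<and> k < card {j. j < n \<and> c \<le> lam j}"
proof -
  define L where "L = map lam [0..<n]"
  have "char_poly (signless_laplacian n E) = (\<Prod>x\<leftarrow>L. [:-x, 1:])"
    unfolding L_def
    by (rule char_poly_eigenbasis[OF _ _ B]) (auto simp: Q_def signless_laplacian_def)
  then have "q_eig n E (k + 1) = rev (sort L) ! k"
    unfolding q_eig_def by (simp add: proots_linear_product sorted_list_of_multiset_mset)
  moreover have "{i. i < length L \<and> P (L ! i)} = {j. j < n \<and> P (lam j)}" for P
    unfolding L_def by auto
  ultimately show ?thesis using kth_largest_eq_iff[of k L c] \<open>k < n\<close> unfolding L_def by simp
qed

end

theorem theorem2:
  fixes n k :: nat and E :: "nat \<Rightarrow> nat \<Rightarrow> bool"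
  assumes "simple_graph n E" and "1 \<le> k" and "k < n"
  shows "q_eig n E (k + 1) = real n - 2 \<longleftrightarrow>
    (card {C \<in> components n (complement n E). balanced_comp (complement n E) C} \<ge> k \<or>
     card {C \<in> components n (complement n E). bipartite_comp (complement n E) C} \<ge> k + 1)"
proof -
  interpret graph n E by (rule graph.intro) (rule assms(1))
  obtain V lam where B: "eigenbasis V lam" using eigenbasis_exists by blast
  have "q_eig n E (k + 1) = real n - 2 \<longleftrightarrow>
      card {j. j < n \<and> real n - 2 < lam j} \<le> k \<and> k < card {j. j < n \<and> real n - 2 \<le> lam j}"
    by (rule q_eig_eq_iff[OF B assms(3)])
  moreover have "card {j. j < n \<and> real n - 2 < lam j} \<le> k"
    using card_eigenvalues_gt_le_1[OF B] assms(2) by simp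
  ultimately show ?thesis using card_eigenvalues_ge_iff[OF B assms(2)] by (simp add: Suc_le_eq)
qed

end
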